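(* Let $\mathcal{G}'$ be the extended game of an rLTL game and let $\sigma$ be a strategy for Player 0 in $\mathcal{G}'$ such that for every play prefix $\mathtt{p}$ and every $(\sigma,\mathtt{p})$-play $\rho$: (i) $\rho$ contains no bad move of Player 0 after $\mathtt{p}$, and (ii) there is an adaptive strategy $\sigma_\rho$ for Player 0 such that $\rho$ is a $(\sigma_\rho,\mathtt{p}')$-play for some prefix $\mathtt{p}'$ of $\rho$. Then $\sigma$ is adaptive.
   Context: Truth values $\mathbb{B}_4=\{1111,0111,0011,0001,0000\}$, ordered $1111>0111>0011>0001>0000$. An rLTL game $\mathcal{G}=(\mathcal{A},\varphi)$: finite arena $\mathcal{A}=(V,E,\lambda)$, $V=V_0\,\dot\cup\,V_1$, $E\subseteq V\times V$, $\lambda:V\to2^{\mathcal{P}}$, and a robust LTL formula $\varphi$ assigning each $\alpha\in(2^{\mathcal{P}})^\omega$ a value $\mathcal{V}(\alpha,\varphi)\in\mathbb{B}_4$ (rLTL semantics of Tabuada and Neider); the value of a play (infinite path) $\rho$ is $\mathcal{V}(\lambda(\rho),\varphi)$; Player 0 maximizes, Player 1 minimizes. For each $b$ fix a deterministic parity automaton $\mathcal{C}^b=(Q^b,2^{\mathcal{P}},q_0^b,\delta^b,\Omega^b)$ accepting $\{w:\mathcal{V}(w,\varphi)\ge b\}$. The extended game $\mathcal{G}'$ is the rLTL game with vertices $V'=V\times Q^{0000}\times\cdots\times Q^{1111}$ owned as their $V$-component, edges $(v_1,\vec q_1)\to(v_2,\vec q_2)$ iff $(v_1,v_2)\in E$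 and $\delta^b(q_1^b,\lambda(v_1))=q_2^b$ for all $b$, labels $\lambda'(v,\vec q)=\lambda(v)$, and formula $\varphi$. A play prefix is a finite nonempty path; a Player $i$ strategy maps prefixes ending in Player $i$ vertices to successors; for an arbitrary prefix $\mathtt{p}=v_0\cdots v_n$, a $(\sigma,\mathtt{p})$-play is a play $\mathtt{p}v_{n+1}\cdots$ with $v_{k+1}=\sigma(v_0\cdots v_k)$ whenever $k\ge n$ and $v_k$ belongs to the owner of $\sigma$. A Player 0 (resp. Player 1) strategy enforces $b$ from $\mathtt{p}$ if every $(\sigma,\mathtt{p})$-play has value $\ge b$ (resp. $\le b$). A Player 0 strategy $\sigma_0$ is adaptive if for every prefix $\mathtt{p}$ and value $b$, if some Player 0 strategy enforces $b$ from $\mathtt{p}$ then $\sigma_0$ enforces $b$ from $\mathtt{p}$. A play $v_0v_1\cdots$ contains a bad move of Player $i$ at position $j>0$ if Player $i$ can enforce some value $b$ from $v_0\cdots v_{j-1}$ but cannot enforce $b$ from $v_0\cdots v_j$; a bad move after $\mathtt{p}$ is one at a position $j\ge|\mathtt{p}|$. *)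

theory Defs
  imports Main
begin

datatype B4 = V0000 | V0001 | V0011 | V0111 | V1111

fun b4_rank :: "B4 \<Rightarrow> nat" where
  "b4_rank V0000 = 0" | "b4_rank V0001 = 1" | "b4_rank V0011 = 2"
| "b4_rank V0111 = 3" | "b4_rank V1111 = 4"

lemma b4_rank_inj: "b4_rank a = b4_rank b \<Longrightarrow> a = b"
  by (cases a; cases b; simp)

instantiation B4 :: linorder
begin
definition less_eq_B4 :: "B4 \<Rightarrow> B4 \<Rightarrow> bool" where
  "less_eq_B4 a b \<longleftrightarrow> b4_rank a \<le> b4_rank b"
definition less_B4 :: "B4 \<Rightarrow> B4 \<Rightarrow> bool" where
  "less_B4 a b \<longleftrightarrow> b4_rank a < b4_rank b"
instance
  by standard (auto simp: less_eq_B4_def less_B4_def intro: b4_rank_inj)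
end

text \<open>Bit k (k = 1..4, counted from the left) of a truth value b1 b2 b3 b4.\<close>
definition b4_bit :: "B4 \<Rightarrow> nat \<Rightarrow> bool" where
  "b4_bit b k \<longleftrightarrow> 5 - k \<le> b4_rank b"

text \<open>The B4 value with given bits b1 b2 b3 b4 (exact on monotone bit vectors,
  which is all that the rLTL semantics produces).\<close>
definition b4_of_bits :: "(nat \<Rightarrow> bool) \<Rightarrow> B4" where
  "b4_of_bits f = (if f 1 then V1111 else if f 2 then V0111 else if f 3 then V0011
                   else if f 4 then V0001 else V0000)"

datatype 'p rltl =
    Atom 'p
  | Neg "'p rltl"
  | Conj "'p rltl" "'p rltl"
  | Disj "'p rltl" "'p rltl"
  | Impl "'p rltl" "'p rltl"
  | Next "'p rltl"
  | Always "'p rltl"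
  | Eventually "'p rltl"
  | Until "'p rltl" "'p rltl"
  | Release "'p rltl" "'p rltl"

definition suffix_w :: "nat \<Rightarrow> (nat \<Rightarrow> 'a) \<Rightarrow> nat \<Rightarrow> 'a" where
  "suffix_w i w = (\<lambda>n. w (n + i))"

primrec rval :: "(nat \<Rightarrow> 'p set) \<Rightarrow> 'p rltl \<Rightarrow> B4" where
  "rval w (Atom p) = (if p \<in> w 0 then V1111 else V0000)"
| "rval w (Neg f) = (if rval w f = V1111 then V0000 else V1111)"
| "rval w (Conj f g) = min (rval w f) (rval w g)"
| "rval w (Disj f g) = max (rval w f) (rval w g)"
| "rval w (Impl f g) = (if rval w f \<le> rval w g then V1111 else rval w g)"
| "rval w (Next f) = rval (suffix_w 1 w) f"
| "rval w (Always f) = b4_of_bits (\<lambda>k.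
      if k = 1 then (\<forall>i. b4_bit (rval (suffix_w i w) f) 1)
      else if k = 2 then (\<exists>j. \<forall>i\<ge>j. b4_bit (rval (suffix_w i w) f) 2)
      else if k = 3 then (\<forall>j. \<exists>i\<ge>j. b4_bit (rval (suffix_w i w) f) 3)
      else (\<exists>i. b4_bit (rval (suffix_w i w) f) 4))"
| "rval w (Eventually f) = b4_of_bits (\<lambda>k. \<exists>i. b4_bit (rval (suffix_w i w) f) k)"
| "rval w (Until f g) = b4_of_bits (\<lambda>k. \<exists>j. b4_bit (rval (suffix_w j w) g) k
      \<and> (\<forall>i<j. b4_bit (rval (suffix_w i w) f) k))"
| "rval w (Release f g) = b4_of_bits (\<lambda>k. \<forall>j. b4_bit (rval (suffix_w j w) g) k
      \<or> (\<exists>i<j. b4_bit (rval (suffix_w i w) f) k))"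

definition dpa :: "'q set \<Rightarrow> 'q \<Rightarrow> ('q \<Rightarrow> 'p set \<Rightarrow> 'q) \<Rightarrow> ('q \<Rightarrow> nat) \<Rightarrow> bool" where
  "dpa Q q0 \<delta> \<Omega> \<longleftrightarrow> finite Q \<and> q0 \<in> Q \<and> (\<forall>q\<in>Q. \<forall>a. \<delta> q a \<in> Q)"

fun dpa_run :: "'q \<Rightarrow> ('q \<Rightarrow> 'p set \<Rightarrow> 'q) \<Rightarrow> (nat \<Rightarrow> 'p set) \<Rightarrow> nat \<Rightarrow> 'q" where
  "dpa_run q0 \<delta> w 0 = q0"
| "dpa_run q0 \<delta> w (Suc n) = \<delta> (dpa_run q0 \<delta> w n) (w n)"

definition dpa_accepts :: "'q \<Rightarrow> ('q \<Rightarrow> 'p set \<Rightarrow> 'q) \<Rightarrow> ('q \<Rightarrow> nat) \<Rightarrow> (nat \<Rightarrow> 'p set) \<Rightarrow> bool" where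
  "dpa_accepts q0 \<delta> \<Omega> w \<longleftrightarrow>
     even (Max (\<Omega> ` {q. infinite {n. dpa_run q0 \<delta> w n = q}}))"

record ('v, 'p) arena =
  aV  :: "'v set"
  aV0 :: "'v set"
  aE  :: "('v \<times> 'v) set"
  alab :: "'v \<Rightarrow> 'p set"

definition finite_arena :: "('v, 'p) arena \<Rightarrow> bool" where
  "finite_arena A \<longleftrightarrow> finite (aV A) \<and> aV0 A \<subseteq> aV A \<and> aE A \<subseteq> aV A \<times> aV A"

definition owner :: "('v, 'p) arena \<Rightarrow> 'v \<Rightarrow> nat" where
  "owner A v = (if v \<in> aV0 A then 0 else 1)"

definition is_prefix :: "('v, 'p) arena \<Rightarrow> 'v list \<Rightarrow> bool" where
  "is_prefix A p \<longleftrightarrow> p \<noteq> [] \<and> set p \<subseteq> aV A \<and>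
     (\<forall>k. Suc k < length p \<longrightarrow> (p ! k, p ! Suc k) \<in> aE A)"

definition is_play :: "('v, 'p) arena \<Rightarrow> (nat \<Rightarrow> 'v) \<Rightarrow> bool" where
  "is_play A \<rho> \<longleftrightarrow> (\<forall>n. \<rho> n \<in> aV A \<and> (\<rho> n, \<rho> (Suc n)) \<in> aE A)"

definition is_strategy :: "('v, 'p) arena \<Rightarrow> nat \<Rightarrow> ('v list \<Rightarrow> 'v) \<Rightarrow> bool" where
  "is_strategy A i \<sigma> \<longleftrightarrow>
     (\<forall>p. is_prefix A p \<and> owner A (last p) = i \<longrightarrow> (last p, \<sigma> p) \<in> aE A)"

text \<open>rho is a (sigma,p)-play, where sigma is a strategy of Player i.\<close>
definition consistent_play :: "('v, 'p) arena \<Rightarrow> nat \<Rightarrow> ('v list \<Rightarrow> 'v) \<Rightarrow> 'v list \<Rightarrow> (nat \<Rightarrow> 'v) \<Rightarrow> bool" where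
  "consistent_play A i \<sigma> p \<rho> \<longleftrightarrow> is_play A \<rho> \<and>
     (\<forall>k<length p. \<rho> k = p ! k) \<and>
     (\<forall>k. length p - 1 \<le> k \<longrightarrow> owner A (\<rho> k) = i \<longrightarrow> \<rho> (Suc k) = \<sigma> (map \<rho> [0..<Suc k]))"

definition play_value :: "('v, 'p) arena \<Rightarrow> 'p rltl \<Rightarrow> (nat \<Rightarrow> 'v) \<Rightarrow> B4" where
  "play_value A \<phi> \<rho> = rval (\<lambda>n. alab A (\<rho> n)) \<phi>"

definition enforces :: "('v, 'p) arena \<Rightarrow> 'p rltl \<Rightarrow> nat \<Rightarrow> ('v list \<Rightarrow> 'v) \<Rightarrow> B4 \<Rightarrow> 'v list \<Rightarrow> bool" where
  "enforces A \<phi> i \<sigma> b p \<longleftrightarrow> (\<forall>\<rho>. consistent_play A i \<sigma> p \<rho> \<longrightarrow>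
     (if i = 0 then b \<le> play_value A \<phi> \<rho> else play_value A \<phi> \<rho> \<le> b))"

definition can_enforce :: "('v, 'p) arena \<Rightarrow> 'p rltl \<Rightarrow> nat \<Rightarrow> B4 \<Rightarrow> 'v list \<Rightarrow> bool" where
  "can_enforce A \<phi> i b p \<longleftrightarrow> (\<exists>\<sigma>. is_strategy A i \<sigma> \<and> enforces A \<phi> i \<sigma> b p)"

definition adaptive :: "('v, 'p) arena \<Rightarrow> 'p rltl \<Rightarrow> ('v list \<Rightarrow> 'v) \<Rightarrow> bool" where
  "adaptive A \<phi> \<sigma> \<longleftrightarrow> is_strategy A 0 \<sigma> \<and>
     (\<forall>p b. is_prefix A p \<longrightarrow> can_enforce A \<phi> 0 b p \<longrightarrow> enforces A \<phi> 0 \<sigma> b p)"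

definition bad_move_at :: "('v, 'p) arena \<Rightarrow> 'p rltl \<Rightarrow> nat \<Rightarrow> (nat \<Rightarrow> 'v) \<Rightarrow> nat \<Rightarrow> bool" where
  "bad_move_at A \<phi> i \<rho> j \<longleftrightarrow> 0 < j \<and>
     (\<exists>b. can_enforce A \<phi> i b (map \<rho> [0..<j]) \<and> \<not> can_enforce A \<phi> i b (map \<rho> [0..<Suc j]))"

definition bad_move_after :: "('v, 'p) arena \<Rightarrow> 'p rltl \<Rightarrow> nat \<Rightarrow> (nat \<Rightarrow> 'v) \<Rightarrow> 'v list \<Rightarrow> bool" where
  "bad_move_after A \<phi> i \<rho> p \<longleftrightarrow> (\<exists>j\<ge>length p. bad_move_at A \<phi> i \<rho> j)"

text \<open>Automata are indexed by b in B4 and share a state type 'q; state vectors are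
  functions B4 => 'q with component b in Q b.\<close>
definition ext_arena :: "('v, 'p) arena \<Rightarrow> (B4 \<Rightarrow> 'q set) \<Rightarrow> (B4 \<Rightarrow> 'q \<Rightarrow> 'p set \<Rightarrow> 'q)
    \<Rightarrow> ('v \<times> (B4 \<Rightarrow> 'q), 'p) arena" where
  "ext_arena A Q \<delta> =
    \<lparr> aV = {(v, qs). v \<in> aV A \<and> (\<forall>b. qs b \<in> Q b)},
      aV0 = {(v, qs). v \<in> aV0 A \<and> (\<forall>b. qs b \<in> Q b)},
      aE = {((v1, qs1), (v2, qs2)). (v1, v2) \<in> aE A \<and> (\<forall>b. qs1 b \<in> Q b) \<and> (\<forall>b. qs2 b \<in> Q b)
              \<and> (\<forall>b. \<delta> b (qs1 b) (alab A v1) = qs2 b)},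
      alab = (\<lambda>(v, qs). alab A v) \<rparr>"

end

theory Submission
  imports Defs
begin

(* Fix a prefix p from which Player 0 can enforce b and a (sigma,p)-play rho.  Since rho has
   no bad move of Player 0 after p, b stays enforceable from every longer prefix of rho.
   Choose such a prefix beyond the point from which rho follows the adaptive strategy
   sigma_rho: there sigma_rho enforces b, and rho is consistent with it, so rho has value
   at least b.  Nothing specific to the extended game is used. *)

lemma is_prefix_map_play:
  assumes "is_play G \<rho>" and "0 < m"
  shows "is_prefix G (map \<rho> [0..<m])"
  using assms unfolding is_prefix_def is_play_def by auto

lemma consistent_play_map_prefix:
  assumes "consistent_play G i \<sigma> p \<rho>"
  shows "map \<rho> [0..<length p] = p"
  using assms unfolding consistent_play_def by (intro nth_equalityI) auto

lemma consistent_play_mono: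
  assumes "consistent_play G i \<sigma> (map \<rho> [0..<n]) \<rho>" and "n \<le> m"
  shows "consistent_play G i \<sigma> (map \<rho> [0..<m]) \<rho>"
  using assms unfolding consistent_play_def by auto

lemma enforces_consistent_play:
  assumes "enforces G \<phi> 0 \<sigma> b p" and "consistent_play G 0 \<sigma> p \<rho>"
  shows "b \<le> play_value G \<phi> \<rho>"
  using assms unfolding enforces_def by auto

lemma can_enforce_if_no_bad_move_after:
  assumes no_bad: "\<not> bad_move_after G \<phi> i \<rho> p"
    and p: "map \<rho> [0..<length p] = p" "p \<noteq> []"
    and enf: "can_enforce G \<phi> i b p"
    and "length p \<le> m"
  shows "can_enforce G \<phi> i b (map \<rho> [0..<m])"
  using \<open>length p \<le> m\<close>
proof (induction m rule: dec_induct)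
  case base
  then show ?case using enf p by simp
next
  case (step k)
  then have "\<not> bad_move_at G \<phi> i \<rho> k"
    using no_bad unfolding bad_move_after_def by auto
  moreover have "0 < k" using step.hyps(1) \<open>p \<noteq> []\<close> by (metis length_greater_0_conv less_le_trans)
  ultimately show ?case using step.IH unfolding bad_move_at_def by auto
qed

lemma adaptive_if_no_bad_move_and_eventually_adaptive:
  assumes strat: "is_strategy G 0 \<sigma>"
    and hyp: "\<And>p \<rho>. is_prefix G p \<Longrightarrow> consistent_play G 0 \<sigma> p \<rho> \<Longrightarrow>
                \<not> bad_move_after G \<phi> 0 \<rho> p \<and>
                (\<exists>\<sigma>\<rho> n. adaptive G \<phi> \<sigma>\<rho> \<and> 0 < n \<and>
                   consistent_play G 0 \<sigma>\<rho> (map \<rho> [0..<n]) \<rho>)"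
  shows "adaptive G \<phi> \<sigma>"
  unfolding adaptive_def
proof (intro conjI strat allI impI)
  fix p b
  assume p: "is_prefix G p" and enf: "can_enforce G \<phi> 0 b p"
  show "enforces G \<phi> 0 \<sigma> b p"
    unfolding enforces_def
  proof (intro allI impI, simp)
    fix \<rho>
    assume \<rho>: "consistent_play G 0 \<sigma> p \<rho>"
    obtain \<sigma>\<rho> n where no_bad: "\<not> bad_move_after G \<phi> 0 \<rho> p"
      and adaptive: "adaptive G \<phi> \<sigma>\<rho>" and "0 < n"
      and follows: "consistent_play G 0 \<sigma>\<rho> (map \<rho> [0..<n]) \<rho>"
      using hyp[OF p \<rho>] by blast
    define m where "m = max n (length p)"
    have "p \<noteq> []" using p unfolding is_prefix_def by simp
    then have "can_enforce G \<phi> 0 b (map \<rho> [0..<m])"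
      using can_enforce_if_no_bad_move_after[OF no_bad consistent_play_map_prefix[OF \<rho>]] enf
      unfolding m_def by simp
    moreover have "is_prefix G (map \<rho> [0..<m])"
      using \<rho> \<open>0 < n\<close> unfolding consistent_play_def m_def by (intro is_prefix_map_play) auto
    ultimately have "enforces G \<phi> 0 \<sigma>\<rho> b (map \<rho> [0..<m])"
      using adaptive unfolding adaptive_def by blast
    moreover have "consistent_play G 0 \<sigma>\<rho> (map \<rho> [0..<m]) \<rho>"
      using consistent_play_mono[OF follows] unfolding m_def by simp
    ultimately show "b \<le> play_value G \<phi> \<rho>"
      by (rule enforces_consistent_play)
  qed
qed

theorem lemma6:
  fixes A :: "('v, 'p::finite) arena"
    and \<phi> :: "'p rltl"
    and Q :: "B4 \<Rightarrow> 'q set"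
    and q0 :: "B4 \<Rightarrow> 'q"
    and \<delta> :: "B4 \<Rightarrow> 'q \<Rightarrow> 'p set \<Rightarrow> 'q"
    and \<Omega> :: "B4 \<Rightarrow> 'q \<Rightarrow> nat"
    and \<sigma> :: "('v \<times> (B4 \<Rightarrow> 'q)) list \<Rightarrow> 'v \<times> (B4 \<Rightarrow> 'q)"
  assumes arena: "finite_arena A"
    and aut: "\<And>b. dpa (Q b) (q0 b) (\<delta> b) (\<Omega> b)"
    and lang: "\<And>b w. dpa_accepts (q0 b) (\<delta> b) (\<Omega> b) w \<longleftrightarrow> b \<le> rval w \<phi>"
    and strat: "is_strategy (ext_arena A Q \<delta>) 0 \<sigma>"
    and hyp: "\<And>p \<rho>. is_prefix (ext_arena A Q \<delta>) p \<Longrightarrow>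
                consistent_play (ext_arena A Q \<delta>) 0 \<sigma> p \<rho> \<Longrightarrow>
                \<not> bad_move_after (ext_arena A Q \<delta>) \<phi> 0 \<rho> p \<and>
                (\<exists>\<sigma>\<rho> n. adaptive (ext_arena A Q \<delta>) \<phi> \<sigma>\<rho> \<and> 0 < n \<and>
                   consistent_play (ext_arena A Q \<delta>) 0 \<sigma>\<rho> (map \<rho> [0..<n]) \<rho>)"
  shows "adaptive (ext_arena A Q \<delta>) \<phi> \<sigma>"
  using strat hyp by (rule adaptive_if_no_bad_move_and_eventually_adaptive)

end
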